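(* Let $G$ be a subgroup of $\mathrm{GL}(d,\mathbb{R})$ and let $f\in\mathbb{R}[x_1,\dots,x_d]$ be a nonzero ordinary polynomial of total degree $n$. Then $R_G(f)$ is finite-dimensional and $$\sqrt[d]{\dim R_G(f)}-1\le n\le\dim R_G(f)-1.$$ Moreover, if $\dim R_G(f)=\binom{n+d}{d}$, then $n\le\sqrt[d]{d!\,\dim R_G(f)}-1$.
   Context: For $g\in C(\mathbb{R}^d)$, $h\in\mathbb{R}^d$, $P\in\mathrm{GL}(d,\mathbb{R})$: $\tau_hg(x)=g(x+h)$ and $O_Pg(x)=g(Px)$. $R_G(f)$ denotes the smallest vector subspace of $C(\mathbb{R}^d)$ containing $f$ and invariant under all $\tau_h$ ($h\in\mathbb{R}^d$) and all $O_P$ ($P\in G$). *)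

theory Defs
  imports "HOL-Analysis.Analysis" "HOL-Library.Function_Algebras"
begin

definition fscale :: "real \<Rightarrow> ('a \<Rightarrow> real) \<Rightarrow> ('a \<Rightarrow> real)" where
  "fscale c g = (\<lambda>x. c * g x)"

definition fsubspace :: "('a \<Rightarrow> real) set \<Rightarrow> bool" where
  "fsubspace V = module.subspace fscale V"

definition fspan :: "('a \<Rightarrow> real) set \<Rightarrow> ('a \<Rightarrow> real) set" where
  "fspan B = module.span fscale B"

definition fdim :: "('a \<Rightarrow> real) set \<Rightarrow> nat" where
  "fdim V = vector_space.dim fscale V"

definition tau :: "real^'n \<Rightarrow> (real^'n \<Rightarrow> real) \<Rightarrow> (real^'n \<Rightarrow> real)" where
  "tau h g = (\<lambda>x. g (x + h))"

definition OP :: "real^'n^'n \<Rightarrow> (real^'n \<Rightarrow> real) \<Rightarrow> (real^'n \<Rightarrow> real)" where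
  "OP P g = (\<lambda>x. g (P *v x))"

definition GL_subgroup :: "(real^'n^'n) set \<Rightarrow> bool" where
  "GL_subgroup G \<longleftrightarrow> (\<forall>P\<in>G. invertible P) \<and> mat 1 \<in> G
     \<and> (\<forall>P\<in>G. \<forall>Q\<in>G. P ** Q \<in> G) \<and> (\<forall>P\<in>G. matrix_inv P \<in> G)"

definition RG :: "(real^'n^'n) set \<Rightarrow> (real^'n \<Rightarrow> real) \<Rightarrow> (real^'n \<Rightarrow> real) set" where
  "RG G f = \<Inter>{V. V \<subseteq> {g. continuous_on UNIV g} \<and> fsubspace V \<and> f \<in> V
      \<and> (\<forall>h. \<forall>g\<in>V. tau h g \<in> V) \<and> (\<forall>P\<in>G. \<forall>g\<in>V. OP P g \<in> V)}"

text \<open>Polynomials in d variables, given by a finitely supported coefficient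
  function on exponent vectors alpha :: 'n => nat.\<close>

definition poly_coeffs :: "(('n \<Rightarrow> nat) \<Rightarrow> real) \<Rightarrow> bool" where
  "poly_coeffs c \<longleftrightarrow> finite {\<alpha>. c \<alpha> \<noteq> 0}"

definition poly_fun :: "(('n::finite \<Rightarrow> nat) \<Rightarrow> real) \<Rightarrow> real^'n \<Rightarrow> real" where
  "poly_fun c x = (\<Sum>\<alpha>\<in>{\<alpha>. c \<alpha> \<noteq> 0}. c \<alpha> * (\<Prod>i\<in>UNIV. (x $ i) ^ \<alpha> i))"

definition total_degree :: "(('n::finite \<Rightarrow> nat) \<Rightarrow> real) \<Rightarrow> nat" where
  "total_degree c = Max {(\<Sum>i\<in>UNIV. \<alpha> i) | \<alpha>. c \<alpha> \<noteq> 0}"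

end

theory Submission
  imports Defs "HOL-Computational_Algebra.Polynomial"
begin

text \<open>A polynomial function of degree at most \<open>n\<close> keeps this bound under every affine
  substitution, so \<open>R\<^sub>G(f)\<close> lies in the span of the at most \<open>(n+1)\<^sup>d\<close> monomials of degree at
  most \<open>n\<close>; the last bound is then just \<open>(n+1)\<^sup>d \<le> d! binom(n+d, d)\<close>. Conversely, choose a
  direction \<open>h\<close> on which the top homogeneous part of \<open>f\<close> does not vanish. Then \<open>s \<mapsto> f(s h)\<close> is
  a univariate polynomial of degree \<open>n\<close>, and the iterated differences \<open>(\<tau>\<^sub>h - id)\<^sup>k f\<close>,
  \<open>k = 0..n\<close>, lie in \<open>R\<^sub>G(f)\<close> and restrict to polynomials of the pairwise distinct degrees
  \<open>n - k\<close>; hence they are linearly independent and \<open>dim R\<^sub>G(f) \<ge> n + 1\<close>.\<close>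

interpretation F: vector_space "fscale :: real \<Rightarrow> ('a \<Rightarrow> real) \<Rightarrow> 'a \<Rightarrow> real"
  by unfold_locales (auto simp: fscale_def fun_eq_iff algebra_simps)

lemma (in vector_space) card_independent_le_dim:
  assumes "V \<subseteq> span W" "finite W" "B \<subseteq> V" "independent B"
  shows "card B \<le> dim V"
proof -
  obtain A where A: "A \<subseteq> V" "independent A" "V \<subseteq> span A" "card A = dim V"
    using basis_exists by blast
  have "finite A"
    using independent_span_bound[OF assms(2) A(2)] A(1) assms(1) by blast
  then show ?thesis
    using independent_span_bound[OF _ assms(4)] A(3,4) assms(3) by fastforce
qed

lemma sum_fun_apply: "(sum F A) x = (\<Sum>a\<in>A. F a x)"
  by (induct A rule: infinite_finite_induct) auto

section \<open>Univariate polynomials\<close>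

definition forward_diff :: "real poly \<Rightarrow> real poly" where
  "forward_diff p = pcompose p [:1, 1:] - p"

lemma poly_forward_diff: "poly (forward_diff p) s = poly p (s + 1) - poly p s"
  by (simp add: forward_diff_def poly_pcompose add.commute)

lemma degree_forward_diff:
  assumes "degree p \<ge> 1"
  shows "degree (forward_diff p) = degree p - 1 \<and>
         lead_coeff (forward_diff p) = of_nat (degree p) * lead_coeff p"
  using assms
proof (induction p)
  case 0
  then show ?case by simp
next
  case (pCons a r)
  have r0: "r \<noteq> 0" using pCons by auto
  have shift: "forward_diff (pCons a r) = [:0, 1:] * forward_diff r + pcompose r [:1, 1:]"
  proof -
    have "[:1, 1::real:] = [:0, 1:] + 1" by (simp add: one_pCons)
    then have "pcompose (pCons a r) [:1, 1:] = [:a:] + ([:0, 1:] + 1) * pcompose r [:1, 1:]"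
      using pcompose_pCons[of a r "[:1, 1:]"] by simp
    moreover have "pCons a r = [:a:] + [:0, 1:] * r" by (simp add: add_pCons)
    moreover have "\<And>A X C R :: real poly. A + (X + 1) * C - (A + X * R) = X * (C - R) + C"
      by (simp add: algebra_simps)
    ultimately show ?thesis unfolding forward_diff_def by metis
  qed
  show ?case
  proof (cases "degree r = 0")
    case True
    then obtain b where "r = [:b:]" by (metis degree_eq_zeroE)
    then show ?thesis unfolding shift using r0 by (simp add: forward_diff_def)
  next
    case False
    let ?D = "forward_diff r" and ?S = "[:0, 1:] * forward_diff r + pcompose r [:1, 1:]"
    have IH: "degree ?D = degree r - 1" "lead_coeff ?D = of_nat (degree r) * lead_coeff r"
      using pCons.IH False r0 by auto
    have lr: "lead_coeff r \<noteq> 0" using r0 by simp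
    have "?D \<noteq> 0" using IH lr False by auto
    then have "degree ([:0, 1:] * ?D) = degree r" using IH False by (simp add: degree_mult_eq)
    moreover have "degree (pcompose r [:1, 1:]) = degree r" by (simp add: degree_pcompose)
    ultimately have "degree ?S \<le> degree r" by (intro degree_add_le) auto
    have "coeff ([:0, 1:] * ?D) (degree r) = of_nat (degree r) * lead_coeff r"
      using IH False by (cases "degree r") (simp_all add: coeff_pCons)
    moreover have "coeff (pcompose r [:1, 1:]) (degree r) = lead_coeff r"
      using lead_coeff_comp[of "[:1, 1::real:]" r] by (simp add: degree_pcompose)
    ultimately have cS: "coeff ?S (degree r) = of_nat (degree r + 1) * lead_coeff r"
      by (simp add: algebra_simps)
    then have "coeff ?S (degree r) \<noteq> 0" using lr by simp
    then have "degree r \<le> degree ?S" by (rule le_degree)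
    with \<open>degree ?S \<le> degree r\<close> have "degree ?S = degree r" by simp
    moreover have "degree (pCons a r) = degree r + 1" using r0 by simp
    ultimately show ?thesis unfolding shift using cS by simp
  qed
qed

lemma degree_iterated_forward_diff:
  assumes "p \<noteq> 0" "k \<le> degree p"
  shows "(forward_diff ^^ k) p \<noteq> 0 \<and> degree ((forward_diff ^^ k) p) = degree p - k"
  using assms(2)
proof (induction k)
  case 0
  then show ?case using assms(1) by simp
next
  case (Suc k)
  let ?q = "(forward_diff ^^ k) p"
  have IH: "?q \<noteq> 0" "degree ?q = degree p - k" using Suc by auto
  then have "degree ?q \<ge> 1" using Suc.prems by simp
  from degree_forward_diff[OF this] have deg: "degree (forward_diff ?q) = degree p - Suc k"
    and lead: "lead_coeff (forward_diff ?q) = of_nat (degree ?q) * lead_coeff ?q"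
    using IH by auto
  have "lead_coeff (forward_diff ?q) \<noteq> 0"
    unfolding lead using IH(1) \<open>degree ?q \<ge> 1\<close> by simp
  then show ?case using deg by auto
qed

lemma poly_sum_distinct_degrees_eq_0:
  fixes q :: "'k \<Rightarrow> real poly"
  assumes "finite K" "\<forall>k\<in>K. q k \<noteq> 0" "inj_on (\<lambda>k. degree (q k)) K"
    and "\<forall>s. (\<Sum>k\<in>K. a k * poly (q k) s) = 0"
  shows "\<forall>k\<in>K. a k = 0"
proof (rule ccontr)
  define K' where "K' = {k\<in>K. a k \<noteq> 0}"
  assume "\<not> (\<forall>k\<in>K. a k = 0)"
  then have "K' \<noteq> {}" "finite K'" using assms(1) by (auto simp: K'_def)
  then have "Max ((\<lambda>k. degree (q k)) ` K') \<in> (\<lambda>k. degree (q k)) ` K'" by simp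
  then obtain m where m: "m \<in> K'" and "degree (q m) = Max ((\<lambda>k. degree (q k)) ` K')" by auto
  then have m_max: "\<forall>k\<in>K'. degree (q k) \<le> degree (q m)" using \<open>finite K'\<close> by simp
  define P where "P = (\<Sum>k\<in>K. smult (a k) (q k))"
  have "poly P s = 0" for s using assms(4) by (simp add: P_def poly_sum)
  then have "P = 0" using poly_all_0_iff_0 by blast
  have others: "a k * coeff (q k) (degree (q m)) = 0" if "k \<in> K - {m}" for k
  proof (cases "a k = 0")
    case False
    then have "degree (q k) \<le> degree (q m)" using m_max that by (simp add: K'_def)
    moreover have "degree (q k) \<noteq> degree (q m)"
      using inj_onD[OF assms(3)] that m(1) unfolding K'_def by blast
    ultimately have "degree (q k) < degree (q m)" by simp
    then show ?thesis by (simp add: coeff_eq_0)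
  qed simp
  have "0 = coeff P (degree (q m))" using \<open>P = 0\<close> by simp
  also have "\<dots> = a m * lead_coeff (q m) + (\<Sum>k\<in>K-{m}. a k * coeff (q k) (degree (q m)))"
    using m assms(1) by (simp add: P_def coeff_sum sum.remove[of K m] K'_def)
  also have "\<dots> = a m * lead_coeff (q m)" using others by (simp add: sum.neutral)
  finally show False using m assms(2) by (simp add: K'_def)
qed

lemma vanishing_sum_powers_group_eq_0:
  fixes f :: "'b \<Rightarrow> real" and k :: "'b \<Rightarrow> nat"
  assumes "finite S" "\<forall>t. (\<Sum>\<beta>\<in>S. f \<beta> * t ^ k \<beta>) = 0"
  shows "(\<Sum>\<beta>\<in>{\<beta>\<in>S. k \<beta> = e}. f \<beta>) = 0"
proof -
  define P where "P = (\<Sum>\<beta>\<in>S. monom (f \<beta>) (k \<beta>))"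
  have "poly P t = 0" for t using assms(2) by (simp add: P_def poly_sum poly_monom)
  then have "P = 0" using poly_all_0_iff_0 by blast
  have "(\<Sum>\<beta>\<in>S. if k \<beta> = e then f \<beta> else 0) = coeff P e" by (simp add: P_def coeff_sum)
  also have "\<dots> = 0" using \<open>P = 0\<close> by simp
  finally show ?thesis by (simp add: sum.inter_filter[OF assms(1)])
qed

lemma poly_vanishing_coeff_eq_0:
  fixes I :: "'n set" and c :: "('n \<Rightarrow> nat) \<Rightarrow> real"
  assumes "finite I" "finite S" "\<forall>\<alpha>\<in>S. \<forall>i. i \<notin> I \<longrightarrow> \<alpha> i = 0"
    and "\<forall>x. (\<Sum>\<alpha>\<in>S. c \<alpha> * (\<Prod>i\<in>I. x i ^ \<alpha> i)) = 0" and "\<alpha> \<in> S"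
  shows "c \<alpha> = 0"
  using assms
proof (induction I arbitrary: S c \<alpha> rule: finite_induct)
  case empty
  then have "\<forall>\<beta>\<in>S. \<beta> = (\<lambda>_. 0)" by auto
  then have "S = {\<alpha>}" using empty.prems(4) by (metis empty_iff insertI1 subsetI subset_antisym insertE)
  then show ?case using empty.prems(3) by simp
next
  case (insert j I)
  define e where "e = \<alpha> j"
  define A where "A x = (\<Sum>\<beta>\<in>{\<beta>\<in>S. \<beta> j = e}. c \<beta> * (\<Prod>i\<in>I. x i ^ \<beta> i))" for x
  have A_eq_0: "A x = 0" for x
    unfolding A_def
  proof (rule vanishing_sum_powers_group_eq_0[OF insert.prems(1)], rule allI)
    fix t
    have "(\<Sum>\<beta>\<in>S. c \<beta> * (\<Prod>i\<in>I. x i ^ \<beta> i) * t ^ \<beta> j)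
        = (\<Sum>\<beta>\<in>S. c \<beta> * (\<Prod>i\<in>insert j I. (x(j:=t)) i ^ \<beta> i))"
    proof (rule sum.cong[OF refl])
      fix \<beta>
      have "(\<Prod>i\<in>I. (x(j:=t)) i ^ \<beta> i) = (\<Prod>i\<in>I. x i ^ \<beta> i)"
        using insert.hyps by (intro prod.cong) auto
      then show "c \<beta> * (\<Prod>i\<in>I. x i ^ \<beta> i) * t ^ \<beta> j = c \<beta> * (\<Prod>i\<in>insert j I. (x(j:=t)) i ^ \<beta> i)"
        using insert.hyps by simp
    qed
    also have "\<dots> = 0" using insert.prems(3) by blast
    finally show "(\<Sum>\<beta>\<in>S. c \<beta> * (\<Prod>i\<in>I. x i ^ \<beta> i) * t ^ \<beta> j) = 0" .
  qed
  define S' where "S' = (\<lambda>\<beta>. \<beta>(j:=0)) ` {\<beta>\<in>S. \<beta> j = e}"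
  define c' where "c' \<gamma> = c (\<gamma>(j:=e))" for \<gamma>
  have inj: "inj_on (\<lambda>\<beta>. \<beta>(j:=0)) {\<beta>\<in>S. \<beta> j = e}"
    by (rule inj_onI) (auto simp: fun_eq_iff, metis)
  have "c' (\<alpha>(j:=0)) = 0"
  proof (rule insert.IH)
    show "finite S'" using insert.prems(1) by (simp add: S'_def)
    show "\<forall>\<alpha>\<in>S'. \<forall>i. i \<notin> I \<longrightarrow> \<alpha> i = 0" using insert.prems(2) by (auto simp: S'_def)
    show "\<alpha>(j:=0) \<in> S'" using insert.prems(4) by (auto simp: S'_def e_def)
    show "\<forall>x. (\<Sum>\<gamma>\<in>S'. c' \<gamma> * (\<Prod>i\<in>I. x i ^ \<gamma> i)) = 0"
    proof
      fix x :: "'n \<Rightarrow> real"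
      have "(\<Sum>\<gamma>\<in>S'. c' \<gamma> * (\<Prod>i\<in>I. x i ^ \<gamma> i))
         = (\<Sum>\<beta>\<in>{\<beta>\<in>S. \<beta> j = e}. c' (\<beta>(j:=0)) * (\<Prod>i\<in>I. x i ^ (\<beta>(j:=0)) i))"
        unfolding S'_def by (rule sum.reindex[OF inj, unfolded comp_def])
      also have "\<dots> = A x" unfolding A_def
      proof (rule sum.cong[OF refl])
        fix \<beta> assume "\<beta> \<in> {\<beta>\<in>S. \<beta> j = e}"
        then have "\<beta>(j:=0, j:=e) = \<beta>" by auto
        moreover have "(\<Prod>i\<in>I. x i ^ (\<beta>(j:=0)) i) = (\<Prod>i\<in>I. x i ^ \<beta> i)"
          using insert.hyps by (intro prod.cong) auto
        ultimately show "c' (\<beta>(j:=0)) * (\<Prod>i\<in>I. x i ^ (\<beta>(j:=0)) i) = c \<beta> * (\<Prod>i\<in>I. x i ^ \<beta> i)"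
          by (simp add: c'_def)
      qed
      also have "\<dots> = 0" by (rule A_eq_0)
      finally show "(\<Sum>\<gamma>\<in>S'. c' \<gamma> * (\<Prod>i\<in>I. x i ^ \<gamma> i)) = 0" .
    qed
  qed
  then show ?case by (simp add: c'_def e_def)
qed

section \<open>Polynomial functions on \<open>\<real>\<^sup>d\<close>\<close>

inductive poly_deg_le :: "nat \<Rightarrow> (real^'n \<Rightarrow> real) \<Rightarrow> bool" where
  const: "poly_deg_le k (\<lambda>x. a)"
| coord: "poly_deg_le 1 (\<lambda>x. x $ i)"
| add: "poly_deg_le k f \<Longrightarrow> poly_deg_le k g \<Longrightarrow> poly_deg_le k (\<lambda>x. f x + g x)"
| mult: "poly_deg_le a f \<Longrightarrow> poly_deg_le b g \<Longrightarrow> poly_deg_le (a + b) (\<lambda>x. f x * g x)"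
| mono: "poly_deg_le a f \<Longrightarrow> a \<le> b \<Longrightarrow> poly_deg_le b f"

lemma continuous_on_poly_deg_le: "poly_deg_le k f \<Longrightarrow> continuous_on UNIV f"
  by (induction rule: poly_deg_le.induct) (auto intro!: continuous_intros)

lemma poly_deg_le_sum:
  "finite A \<Longrightarrow> \<forall>a\<in>A. poly_deg_le k (f a) \<Longrightarrow> poly_deg_le k (\<lambda>x. \<Sum>a\<in>A. f a x)"
  by (induction A rule: finite_induct) (auto intro: poly_deg_le.intros)

lemma poly_deg_le_prod:
  "finite A \<Longrightarrow> \<forall>a\<in>A. poly_deg_le (k a) (f a) \<Longrightarrow>
    poly_deg_le (\<Sum>a\<in>A. k a) (\<lambda>x. \<Prod>a\<in>A. f a x)"
  by (induction A rule: finite_induct) (auto intro: poly_deg_le.intros)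

lemma poly_deg_le_power: "poly_deg_le k f \<Longrightarrow> poly_deg_le (m * k) (\<lambda>x. f x ^ m)"
  by (induction m) (auto intro: poly_deg_le.intros)

lemma poly_deg_le_affine: "poly_deg_le k f \<Longrightarrow> poly_deg_le k (\<lambda>x. f (P *v x + h))"
proof (induction rule: poly_deg_le.induct)
  case (coord i)
  have "poly_deg_le (0 + 1) (\<lambda>x. P $ i $ j * x $ j)" for j
    by (rule poly_deg_le.mult) (rule poly_deg_le.const, rule poly_deg_le.coord)
  then have "poly_deg_le 1 (\<lambda>x. \<Sum>j\<in>UNIV. P $ i $ j * x $ j)"
    by (intro poly_deg_le_sum) auto
  from poly_deg_le.add[OF this poly_deg_le.const] show ?case
    by (simp add: matrix_vector_mult_def)
qed (auto intro: poly_deg_le.intros)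

definition monomial_fun :: "('n::finite \<Rightarrow> nat) \<Rightarrow> real^'n \<Rightarrow> real" where
  "monomial_fun \<alpha> = (\<lambda>x. \<Prod>i\<in>UNIV. (x $ i) ^ \<alpha> i)"

definition monomials_upto :: "nat \<Rightarrow> (real^'n::finite \<Rightarrow> real) set" where
  "monomials_upto k = monomial_fun ` {\<alpha>. sum \<alpha> UNIV \<le> k}"

lemma poly_deg_le_monomial_fun: "poly_deg_le (sum \<alpha> UNIV) (monomial_fun \<alpha>)"
proof -
  have "poly_deg_le (\<alpha> i * 1) (\<lambda>x. x $ i ^ \<alpha> i)" for i
    by (intro poly_deg_le_power poly_deg_le.coord)
  then have "poly_deg_le (\<Sum>i\<in>UNIV. \<alpha> i) (\<lambda>x. \<Prod>i\<in>UNIV. (x $ i) ^ \<alpha> i)"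
    by (intro poly_deg_le_prod) auto
  then show ?thesis by (simp add: monomial_fun_def)
qed

lemma monomials_upto_mono: "a \<le> b \<Longrightarrow> monomials_upto a \<subseteq> monomials_upto b"
  by (auto simp: monomials_upto_def)

lemma monomial_fun_mult: "(\<lambda>x. monomial_fun \<alpha> x * monomial_fun \<beta> x) = monomial_fun (\<lambda>i. \<alpha> i + \<beta> i)"
  by (simp add: monomial_fun_def power_add prod.distrib)

lemma finite_monomials_upto: "finite (monomials_upto n :: (real^'n \<Rightarrow> real) set)"
  and card_monomials_upto_le: "card (monomials_upto n :: (real^'n \<Rightarrow> real) set) \<le> (n + 1) ^ CARD('n)"
proof -
  have "\<alpha> \<in> PiE UNIV (\<lambda>_. {..n})" if "sum \<alpha> UNIV \<le> n" for \<alpha> :: "'n \<Rightarrow> nat"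
    using member_le_sum[of _ UNIV \<alpha>] that by (auto simp: PiE_def intro: order_trans)
  then have sub: "monomials_upto n \<subseteq> (monomial_fun ` PiE UNIV (\<lambda>_. {..n}) :: (real^'n \<Rightarrow> real) set)"
    by (auto simp: monomials_upto_def)
  have fin: "finite (PiE (UNIV::'n set) (\<lambda>_. {..n}))" by (simp add: finite_PiE)
  then show "finite (monomials_upto n :: (real^'n \<Rightarrow> real) set)" by (rule finite_subset[OF sub finite_imageI])
  have "card (monomials_upto n :: (real^'n \<Rightarrow> real) set)
      \<le> card (monomial_fun ` PiE UNIV (\<lambda>_. {..n}) :: (real^'n \<Rightarrow> real) set)"
    by (rule card_mono[OF finite_imageI[OF fin] sub])
  also have "\<dots> \<le> card (PiE (UNIV::'n set) (\<lambda>_. {..n}))" using fin by (rule card_image_le)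
  also have "\<dots> = (n + 1) ^ CARD('n)" by (simp add: card_PiE)
  finally show "card (monomials_upto n :: (real^'n \<Rightarrow> real) set) \<le> (n + 1) ^ CARD('n)" .
qed

lemma subspace_mult_in_span:
  "F.subspace {f. (\<lambda>x. f x * g x) \<in> F.span T}"
  unfolding F.subspace_def
proof (intro conjI ballI allI)
  show "0 \<in> {f. (\<lambda>x. f x * g x) \<in> F.span T}"
    using F.span_zero by (simp add: zero_fun_def)
next
  fix u v assume "u \<in> {f. (\<lambda>x. f x * g x) \<in> F.span T}" "v \<in> {f. (\<lambda>x. f x * g x) \<in> F.span T}"
  then have "(\<lambda>x. u x * g x) + (\<lambda>x. v x * g x) \<in> F.span T" using F.span_add by blast
  then show "u + v \<in> {f. (\<lambda>x. f x * g x) \<in> F.span T}" by (simp add: plus_fun_def algebra_simps)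
next
  fix c u assume "u \<in> {f. (\<lambda>x. f x * g x) \<in> F.span T}"
  then have "fscale c (\<lambda>x. u x * g x) \<in> F.span T" using F.span_scale by blast
  then show "fscale c u \<in> {f. (\<lambda>x. f x * g x) \<in> F.span T}" by (simp add: fscale_def algebra_simps)
qed

lemma span_monomials_upto_mult:
  assumes "f \<in> F.span (monomials_upto a)" "g \<in> F.span (monomials_upto b)"
  shows "(\<lambda>x. f x * g x) \<in> F.span (monomials_upto (a + b))"
proof -
  have monomial_times: "(\<lambda>x. m x * g x) \<in> F.span (monomials_upto (a + b))"
    if m: "m \<in> monomials_upto a" for m
  proof -
    obtain \<alpha> where \<alpha>: "m = monomial_fun \<alpha>" "sum \<alpha> UNIV \<le> a"
      using m by (auto simp: monomials_upto_def)
    show ?thesis using assms(2)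
    proof (induction rule: F.span_induct)
      case base
      show ?case using subspace_mult_in_span[of m] by (simp add: mult.commute)
    next
      case (step m')
      obtain \<beta> where \<beta>: "m' = monomial_fun \<beta>" "sum \<beta> UNIV \<le> b"
        using step by (auto simp: monomials_upto_def)
      have "monomial_fun (\<lambda>i. \<alpha> i + \<beta> i) \<in> monomials_upto (a + b)"
        using \<alpha> \<beta> by (auto simp: monomials_upto_def sum.distrib)
      then show ?case using \<alpha> \<beta> by (simp add: monomial_fun_mult F.span_base)
    qed
  qed
  show ?thesis using assms(1)
    by (induction rule: F.span_induct) (use subspace_mult_in_span monomial_times in auto)
qed

lemma poly_deg_le_in_span_monomials:
  fixes f :: "real^'n \<Rightarrow> real"
  shows "poly_deg_le k f \<Longrightarrow> f \<in> F.span (monomials_upto k)"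
proof (induction rule: poly_deg_le.induct)
  case (const k a)
  have "(monomial_fun (\<lambda>_. 0) :: real^'n \<Rightarrow> real) \<in> monomials_upto k"
    by (auto simp: monomials_upto_def)
  then have "fscale a (monomial_fun (\<lambda>_. 0) :: real^'n \<Rightarrow> real) \<in> F.span (monomials_upto k)"
    by (intro F.span_scale F.span_base)
  moreover have "fscale a (monomial_fun (\<lambda>_. 0) :: real^'n \<Rightarrow> real) = (\<lambda>x. a)"
    by (simp add: fscale_def monomial_fun_def)
  ultimately show ?case by metis
next
  case (coord i)
  have "monomial_fun (\<lambda>j. if j = i then 1 else 0) = (\<lambda>x. x $ i)"
    by (simp add: monomial_fun_def fun_eq_iff if_distrib[of "\<lambda>e. _ ^ e"] prod.delta cong: if_cong)
  moreover have "monomial_fun (\<lambda>j. if j = i then 1 else 0) \<in> monomials_upto 1"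
    by (auto simp: monomials_upto_def)
  ultimately show ?case by (metis F.span_base)
next
  case (add k f g)
  then have "f + g \<in> F.span (monomials_upto k)" using F.span_add by blast
  then show ?case by (simp add: plus_fun_def)
next
  case (mult a f b g)
  then show ?case using span_monomials_upto_mult by blast
next
  case (mono a f b)
  then show ?case using F.span_mono[OF monomials_upto_mono] by blast
qed

lemma poly_fun_eq_sum_monomial_fun:
  "poly_fun c = (\<lambda>x. \<Sum>\<alpha>\<in>{\<alpha>. c \<alpha> \<noteq> 0}. c \<alpha> * monomial_fun \<alpha> x)"
  by (simp add: fun_eq_iff poly_fun_def monomial_fun_def)

lemma total_degree_eq_Max: "total_degree c = Max ((\<lambda>\<alpha>. sum \<alpha> UNIV) ` {\<alpha>. c \<alpha> \<noteq> 0})"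
  unfolding total_degree_def by (rule arg_cong[where f = Max]) auto

lemma total_degree_ge: "poly_coeffs c \<Longrightarrow> c \<alpha> \<noteq> 0 \<Longrightarrow> sum \<alpha> UNIV \<le> total_degree c"
  unfolding total_degree_eq_Max poly_coeffs_def by (rule Max_ge) auto

lemma total_degree_attained:
  assumes "poly_coeffs c" "\<exists>\<alpha>. c \<alpha> \<noteq> 0"
  obtains \<alpha> where "c \<alpha> \<noteq> 0" "sum \<alpha> UNIV = total_degree c"
proof -
  have "finite {\<alpha>. c \<alpha> \<noteq> 0}" using assms(1) by (simp add: poly_coeffs_def)
  then have "total_degree c \<in> (\<lambda>\<alpha>. sum \<alpha> UNIV) ` {\<alpha>. c \<alpha> \<noteq> 0}"
    unfolding total_degree_eq_Max using assms(2) by (intro Max_in) auto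
  then show ?thesis using that by auto
qed

lemma poly_deg_le_poly_fun:
  assumes "poly_coeffs c"
  shows "poly_deg_le (total_degree c) (poly_fun c)"
  unfolding poly_fun_eq_sum_monomial_fun
proof (rule poly_deg_le_sum)
  show "finite {\<alpha>. c \<alpha> \<noteq> 0}" using assms by (simp add: poly_coeffs_def)
  show "\<forall>\<alpha>\<in>{\<alpha>. c \<alpha> \<noteq> 0}. poly_deg_le (total_degree c) (\<lambda>x. c \<alpha> * monomial_fun \<alpha> x)"
  proof
    fix \<alpha> assume "\<alpha> \<in> {\<alpha>. c \<alpha> \<noteq> 0}"
    then have "sum \<alpha> UNIV \<le> total_degree c" using assms by (simp add: total_degree_ge)
    moreover have "poly_deg_le (0 + sum \<alpha> UNIV) (\<lambda>x. c \<alpha> * monomial_fun \<alpha> x)"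
      by (rule poly_deg_le.mult[OF poly_deg_le.const poly_deg_le_monomial_fun])
    ultimately show "poly_deg_le (total_degree c) (\<lambda>x. c \<alpha> * monomial_fun \<alpha> x)"
      using poly_deg_le.mono by auto
  qed
qed

lemma top_homogeneous_part_nonvanishing:
  fixes c :: "('n::finite \<Rightarrow> nat) \<Rightarrow> real"
  assumes "poly_coeffs c" "\<exists>\<alpha>. c \<alpha> \<noteq> 0"
  obtains h :: "real^'n"
  where "(\<Sum>\<alpha>\<in>{\<alpha>. c \<alpha> \<noteq> 0 \<and> sum \<alpha> UNIV = total_degree c}. c \<alpha> * (\<Prod>i\<in>UNIV. (h $ i) ^ \<alpha> i)) \<noteq> 0"
proof (rule ccontr)
  let ?S = "{\<alpha>. c \<alpha> \<noteq> 0 \<and> sum \<alpha> UNIV = total_degree c}"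
  assume "\<not> thesis"
  have "\<forall>x::'n \<Rightarrow> real. (\<Sum>\<alpha>\<in>?S. c \<alpha> * (\<Prod>i\<in>UNIV. x i ^ \<alpha> i)) = 0"
  proof
    fix x :: "'n \<Rightarrow> real"
    show "(\<Sum>\<alpha>\<in>?S. c \<alpha> * (\<Prod>i\<in>UNIV. x i ^ \<alpha> i)) = 0"
      using that[of "vec_lambda x"] \<open>\<not> thesis\<close> by force
  qed
  moreover obtain \<alpha> where "c \<alpha> \<noteq> 0" "sum \<alpha> UNIV = total_degree c"
    using total_degree_attained[OF assms] .
  moreover have "finite ?S" using assms(1) by (simp add: poly_coeffs_def)
  ultimately have "c \<alpha> = 0" by (intro poly_vanishing_coeff_eq_0[of UNIV ?S]) auto
  with \<open>c \<alpha> \<noteq> 0\<close> show False by contradiction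
qed

lemma poly_fun_on_line:
  fixes c :: "('n::finite \<Rightarrow> nat) \<Rightarrow> real"
  assumes "poly_coeffs c" "\<exists>\<alpha>. c \<alpha> \<noteq> 0"
  obtains h p where "p \<noteq> 0" "degree p = total_degree c" "\<And>s. poly_fun c (s *\<^sub>R h) = poly p s"
proof -
  let ?supp = "{\<alpha>. c \<alpha> \<noteq> 0}" and ?n = "total_degree c"
  have fin: "finite ?supp" using assms(1) by (simp add: poly_coeffs_def)
  obtain h :: "real^'n"
    where top: "(\<Sum>\<alpha>\<in>{\<alpha>. c \<alpha> \<noteq> 0 \<and> sum \<alpha> UNIV = ?n}. c \<alpha> * (\<Prod>i\<in>UNIV. (h $ i) ^ \<alpha> i)) \<noteq> 0"
    using top_homogeneous_part_nonvanishing[OF assms] .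
  define p where "p = (\<Sum>\<alpha>\<in>?supp. monom (c \<alpha> * (\<Prod>i\<in>UNIV. (h $ i) ^ \<alpha> i)) (sum \<alpha> UNIV))"
  have on_line: "poly p s = poly_fun c (s *\<^sub>R h)" for s
  proof -
    have "poly p s = (\<Sum>\<alpha>\<in>?supp. c \<alpha> * (\<Prod>i\<in>UNIV. (h $ i) ^ \<alpha> i) * s ^ sum \<alpha> UNIV)"
      by (simp add: p_def poly_sum poly_monom)
    also have "\<dots> = (\<Sum>\<alpha>\<in>?supp. c \<alpha> * monomial_fun \<alpha> (s *\<^sub>R h))"
      by (intro sum.cong refl)
        (simp add: monomial_fun_def power_mult_distrib prod.distrib power_sum algebra_simps)
    finally show ?thesis by (simp add: poly_fun_eq_sum_monomial_fun)
  qed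
  have coeff_p: "coeff p j = (\<Sum>\<alpha>\<in>?supp. if sum \<alpha> UNIV = j then c \<alpha> * (\<Prod>i\<in>UNIV. (h $ i) ^ \<alpha> i) else 0)"
    for j by (simp add: p_def coeff_sum)
  have "coeff p j = 0" if "j > ?n" for j
    unfolding coeff_p using total_degree_ge[OF assms(1)] that
    by (intro sum.neutral) force
  then have "degree p \<le> ?n" by (intro degree_le) auto
  have "coeff p ?n = (\<Sum>\<alpha>\<in>{\<alpha>\<in>?supp. sum \<alpha> UNIV = ?n}. c \<alpha> * (\<Prod>i\<in>UNIV. (h $ i) ^ \<alpha> i))"
    unfolding coeff_p by (rule sum.inter_filter[OF fin, symmetric])
  then have top_coeff: "coeff p ?n \<noteq> 0" using top by simp
  then have "?n \<le> degree p" by (rule le_degree)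
  with \<open>degree p \<le> ?n\<close> top_coeff have "p \<noteq> 0" "degree p = ?n" by auto
  then show ?thesis using that on_line by metis
qed

section \<open>The space \<open>R\<^sub>G(f)\<close>\<close>

lemma RG_minimal:
  assumes "V \<subseteq> {g. continuous_on UNIV g}" "fsubspace V" "f \<in> V"
    "\<forall>h. \<forall>g\<in>V. tau h g \<in> V" "\<forall>P\<in>G. \<forall>g\<in>V. OP P g \<in> V"
  shows "RG G f \<subseteq> V"
  unfolding RG_def using assms by (intro Inter_lower) simp

lemma subspace_RG: "F.subspace (RG G f)"
  unfolding RG_def by (rule F.subspace_Inter) (auto simp: fsubspace_def)

lemma RG_in: "f \<in> RG G f"
  unfolding RG_def by auto

lemma tau_RG: "g \<in> RG G f \<Longrightarrow> tau h g \<in> RG G f"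
  unfolding RG_def by auto

lemma RG_subset_span_monomials:
  fixes f :: "real^'n \<Rightarrow> real"
  assumes "poly_deg_le n f"
  shows "RG G f \<subseteq> F.span (monomials_upto n)"
proof -
  let ?V = "Collect (poly_deg_le n) :: (real^'n \<Rightarrow> real) set"
  have "RG G f \<subseteq> ?V"
  proof (rule RG_minimal)
    show "?V \<subseteq> {g. continuous_on UNIV g}" using continuous_on_poly_deg_le by blast
    show "f \<in> ?V" using assms by simp
    show "fsubspace ?V" unfolding fsubspace_def
    proof (rule F.subspaceI)
      show "0 \<in> ?V" using poly_deg_le.const[of n 0] by (simp add: zero_fun_def)
      fix u v :: "real^'n \<Rightarrow> real" assume "u \<in> ?V" "v \<in> ?V"
      then show "u + v \<in> ?V" using poly_deg_le.add[of n u v] by (simp add: plus_fun_def)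
    next
      fix a and u :: "real^'n \<Rightarrow> real" assume "u \<in> ?V"
      then show "fscale a u \<in> ?V"
        using poly_deg_le.mult[OF poly_deg_le.const[of 0 a], of n u] by (simp add: fscale_def)
    qed
    show "\<forall>h. \<forall>g\<in>?V. tau h g \<in> ?V"
      using poly_deg_le_affine[of n _ "mat 1"] by (simp add: tau_def) blast
    show "\<forall>P\<in>G. \<forall>g\<in>?V. OP P g \<in> ?V"
      using poly_deg_le_affine[of n _ _ 0] by (simp add: OP_def) blast
  qed
  also have "\<dots> \<subseteq> F.span (monomials_upto n)" using poly_deg_le_in_span_monomials by blast
  finally show ?thesis .
qed

lemma RG_finite_basis:
  fixes f :: "real^'n \<Rightarrow> real"
  assumes "poly_deg_le n f"
  obtains B where "finite B" "F.span B = RG G f"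
proof -
  obtain B where B: "B \<subseteq> RG G f" "F.independent B" "RG G f \<subseteq> F.span B"
    by (metis F.basis_exists)
  have "B \<subseteq> F.span (monomials_upto n)"
    using B(1) RG_subset_span_monomials[OF assms] by (rule order_trans)
  then have "finite B" by (rule conjunct1[OF F.independent_span_bound[OF finite_monomials_upto B(2)]])
  moreover have "F.span B = RG G f"
    using F.span_minimal[OF B(1) subspace_RG] B(3) by (rule subset_antisym)
  ultimately show ?thesis by (rule that)
qed

lemma dim_RG_le:
  fixes f :: "real^'n \<Rightarrow> real"
  assumes "poly_deg_le n f"
  shows "F.dim (RG G f) \<le> (n + 1) ^ CARD('n)"
proof -
  have "F.dim (RG G f) \<le> card (monomials_upto n :: (real^'n \<Rightarrow> real) set)"
    by (rule F.dim_le_card[OF RG_subset_span_monomials[OF assms] finite_monomials_upto])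
  also have "\<dots> \<le> (n + 1) ^ CARD('n)" by (rule card_monomials_upto_le)
  finally show ?thesis .
qed

definition tau_diff :: "real^'n \<Rightarrow> (real^'n \<Rightarrow> real) \<Rightarrow> (real^'n \<Rightarrow> real)" where
  "tau_diff h g = tau h g - g"

lemma iterated_tau_diff_in_subspace:
  assumes "F.subspace V" "f \<in> V" "\<forall>g\<in>V. tau h g \<in> V"
  shows "(tau_diff h ^^ k) f \<in> V"
proof (induction k)
  case (Suc k)
  then have "tau_diff h ((tau_diff h ^^ k) f) \<in> V"
    unfolding tau_diff_def using assms by (blast intro: F.subspace_diff)
  then show ?case by simp
qed (simp add: assms(2))

lemma iterated_tau_diff_on_line:
  assumes "\<And>s. f (s *\<^sub>R h) = poly p s"
  shows "(tau_diff h ^^ k) f (s *\<^sub>R h) = poly ((forward_diff ^^ k) p) s"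
proof (induction k arbitrary: s)
  case 0
  then show ?case using assms by simp
next
  case (Suc k)
  have "(tau_diff h ^^ Suc k) f (s *\<^sub>R h)
      = (tau_diff h ^^ k) f (s *\<^sub>R h + h) - (tau_diff h ^^ k) f (s *\<^sub>R h)"
    by (simp add: tau_diff_def tau_def)
  also have "\<dots> = (tau_diff h ^^ k) f ((s + 1) *\<^sub>R h) - (tau_diff h ^^ k) f (s *\<^sub>R h)"
    by (simp only: scaleR_add_left scaleR_one)
  also have "\<dots> = poly ((forward_diff ^^ Suc k) p) s"
    by (simp only: Suc.IH poly_forward_diff funpow.simps o_apply)
  finally show ?case .
qed

lemma independent_iterated_tau_diff:
  assumes "F.subspace V" "f \<in> V" "\<forall>g\<in>V. tau h g \<in> V"
    and "p \<noteq> 0" "\<And>s. f (s *\<^sub>R h) = poly p s"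
  obtains B where "B \<subseteq> V" "F.independent B" "card B = degree p + 1"
proof -
  let ?n = "degree p" and ?g = "\<lambda>k. (tau_diff h ^^ k) f" and ?q = "\<lambda>k. (forward_diff ^^ k) p"
  have q: "?q k \<noteq> 0" "degree (?q k) = ?n - k" if "k \<le> ?n" for k
    using degree_iterated_forward_diff[OF assms(4) that] by auto
  have inj_degree: "inj_on (\<lambda>k. degree (?q k)) {..?n}"
    by (rule inj_onI) (simp add: q)
  have inj: "inj_on ?g {..?n}"
  proof (rule inj_onI)
    fix a b assume "a \<in> {..?n}" "b \<in> {..?n}" "?g a = ?g b"
    then have "poly (?q a) s = poly (?q b) s" for s
      using iterated_tau_diff_on_line[OF assms(5), symmetric] by metis
    then have "?q a = ?q b" by (simp add: poly_eq_poly_eq_iff[symmetric] fun_eq_iff)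
    then show "a = b" using inj_onD[OF inj_degree] \<open>a \<in> _\<close> \<open>b \<in> _\<close> by simp
  qed
  have "F.independent (?g ` {..?n})"
  proof (rule F.independent_if_scalars_zero)
    fix u x assume sum0: "(\<Sum>x\<in>?g ` {..?n}. fscale (u x) x) = 0" and "x \<in> ?g ` {..?n}"
    have sums: "\<forall>s. (\<Sum>k\<in>{..?n}. u (?g k) * poly (?q k) s) = 0"
    proof
      fix s
      have "(\<Sum>k\<in>{..?n}. fscale (u (?g k)) (?g k)) (s *\<^sub>R h) = 0"
        using sum0 by (simp add: sum.reindex[OF inj])
      then show "(\<Sum>k\<in>{..?n}. u (?g k) * poly (?q k) s) = 0"
        by (simp add: sum_fun_apply fscale_def iterated_tau_diff_on_line[OF assms(5)])
    qed
    have "\<forall>k\<in>{..?n}. u (?g k) = 0"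
      by (rule poly_sum_distinct_degrees_eq_0[OF finite_atMost _ inj_degree sums]) (simp add: q)
    then show "u x = 0" using \<open>x \<in> _\<close> by blast
  qed simp
  moreover have "?g ` {..?n} \<subseteq> V" using iterated_tau_diff_in_subspace[OF assms(1-3)] by blast
  moreover have "card (?g ` {..?n}) = ?n + 1" by (simp add: card_image[OF inj])
  ultimately show ?thesis using that by blast
qed

lemma dim_RG_ge:
  assumes "poly_coeffs c" "\<exists>\<alpha>. c \<alpha> \<noteq> 0"
  shows "total_degree c + 1 \<le> F.dim (RG G (poly_fun c))"
proof -
  obtain h p where p: "p \<noteq> 0" "degree p = total_degree c" "\<And>s. poly_fun c (s *\<^sub>R h) = poly p s"
    using poly_fun_on_line[OF assms] by metis
  have "\<forall>g\<in>RG G (poly_fun c). tau h g \<in> RG G (poly_fun c)" using tau_RG by blast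
  from independent_iterated_tau_diff[OF subspace_RG RG_in this p(1,3)]
  obtain B where B: "B \<subseteq> RG G (poly_fun c)" "F.independent B" "card B = total_degree c + 1"
    unfolding p(2) .
  have "card B \<le> F.dim (RG G (poly_fun c))"
    using RG_subset_span_monomials[OF poly_deg_le_poly_fun[OF assms(1)]] finite_monomials_upto B(1,2)
    by (rule F.card_independent_le_dim)
  then show ?thesis using B(3) by simp
qed

lemma Suc_power_le_fact_mult_choose: "(n + 1) ^ d \<le> fact d * ((n + d) choose d)"
proof -
  have "(n + 1) ^ d * fact n \<le> (fact (n + d) :: nat)"
  proof (induction d)
    case (Suc d)
    have "(n + 1) ^ Suc d * fact n = (n + 1) * ((n + 1) ^ d * fact n)" by (simp add: algebra_simps)
    also have "\<dots> \<le> (n + Suc d) * fact (n + d)" using Suc by (intro mult_mono) auto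
    finally show ?case by simp
  qed simp
  also have "\<dots> = fact d * ((n + d) choose d) * fact n"
    using binomial_fact_lemma[of d "n + d"] by (simp add: algebra_simps)
  finally show ?thesis by simp
qed

lemma root_le_iff_le_power:
  assumes "0 < d" "0 \<le> y"
  shows "root d x \<le> y \<longleftrightarrow> x \<le> y ^ d"
proof -
  have "root d x \<le> y \<longleftrightarrow> root d x \<le> root d (y ^ d)" using assms by (simp add: real_root_pos2)
  also have "\<dots> \<longleftrightarrow> x \<le> y ^ d" using assms(1) by simp
  finally show ?thesis .
qed

lemma le_root_iff_power_le:
  assumes "0 < d" "0 \<le> y"
  shows "y \<le> root d x \<longleftrightarrow> y ^ d \<le> x"
proof -
  have "y \<le> root d x \<longleftrightarrow> root d (y ^ d) \<le> root d x" using assms by (simp add: real_root_pos2)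
  also have "\<dots> \<longleftrightarrow> y ^ d \<le> x" using assms(1) by simp
  finally show ?thesis .
qed

theorem mainTheorem8:
  fixes G :: "(real^'n^'n) set" and c :: "('n \<Rightarrow> nat) \<Rightarrow> real" and n :: nat
  assumes "GL_subgroup G"
    and "poly_coeffs c" and "\<exists>\<alpha>. c \<alpha> \<noteq> 0"
    and "total_degree c = n"
  shows "(\<exists>B. finite B \<and> fspan B = RG G (poly_fun c))
    \<and> root CARD('n) (real (fdim (RG G (poly_fun c)))) - 1 \<le> real n
    \<and> real n \<le> real (fdim (RG G (poly_fun c))) - 1
    \<and> (fdim (RG G (poly_fun c)) = (n + CARD('n)) choose CARD('n) \<longrightarrow>
        real n \<le> root CARD('n) (fact CARD('n) * real (fdim (RG G (poly_fun c)))) - 1)"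
proof -
  let ?R = "RG G (poly_fun c)" and ?d = "CARD('n)"
  have deg: "poly_deg_le n (poly_fun c)" using poly_deg_le_poly_fun[OF assms(2)] assms(4) by simp
  obtain B where "finite B" "F.span B = ?R" using RG_finite_basis[OF deg] .
  then have basis: "\<exists>B. finite B \<and> fspan B = ?R" by (auto simp: fspan_def)
  have "real (F.dim ?R) \<le> real ((n + 1) ^ ?d)"
    using dim_RG_le[OF deg] by (simp only: of_nat_le_iff)
  then have upper: "root ?d (real (F.dim ?R)) \<le> real n + 1"
    by (simp add: root_le_iff_le_power add.commute)
  have lower: "n + 1 \<le> F.dim ?R" using dim_RG_ge[OF assms(2,3)] assms(4) by simp
  have binomial: "real n + 1 \<le> root ?d (fact ?d * real (F.dim ?R))"
    if "F.dim ?R = (n + ?d) choose ?d"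
  proof -
    have "(n + 1) ^ ?d \<le> fact ?d * F.dim ?R"
      using Suc_power_le_fact_mult_choose[of n ?d] that by simp
    then have "real ((n + 1) ^ ?d) \<le> real (fact ?d * F.dim ?R)" by (simp only: of_nat_le_iff)
    then show ?thesis by (simp add: le_root_iff_power_le add.commute)
  qed
  show ?thesis
    unfolding fdim_def using basis upper binomial lower by (auto simp flip: of_nat_le_iff)
qed

end
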